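(* Let $G$ and $H$ be rooted graphs. For any integers $g,h,k\ge 0$ and $m\ge 2$, \[ X_{S^{ghk}(G,H,C_m)}=(m-1)\,X_{S^{gh}_{k+m-1}(G,H)}-\sum_{l=1}^{m-2}X_{S^{gh}_{k+l-1}(G,H)}\,X_{C_{m-l}}. \]
   Context: All graphs are finite simple graphs. The chromatic symmetric function of a graph $G$ is $X_G=\sum_{\kappa}\prod_{v\in V(G)}x_{\kappa(v)}$, where $\kappa$ ranges over proper colorings $\kappa:V(G)\to\{1,2,\dots\}$. $C_m$ is the cycle on $m$ vertices for $m\ge3$, $C_2:=K_2$, rooted at any vertex. For nonnegative integers $\tau_1,\tau_2,\tau_3$ and rooted graphs $(G_i,u_i)$, $S^{\tau_1\tau_2\tau_3}(G_1,G_2,G_3)$ is obtained by taking a center vertex $c$ and three paths from $c$, disjoint except at $c$, of lengths $\tau_1,\tau_2,\tau_3$, and identifying $u_i$ with the far end of the $i$-th path (with $c$ itself if $\tau_i=0$), the $G_i$ being disjoint. $S^{gh}_{j}(G,H)$ denotes $S^{ghj}(G,H,K_1)$, i.e., the third leg is a plain path of length $j$ ending in a leaf. *)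

theory Defs
  imports Main
begin

type_synonym 'a graph = "'a set \<times> 'a set set"

definition simple_graph :: "'a graph \<Rightarrow> bool" where
  "simple_graph G \<longleftrightarrow> finite (fst G) \<and>
     (\<forall>e\<in>snd G. \<exists>x y. e = {x, y} \<and> x \<noteq> y \<and> x \<in> fst G \<and> y \<in> fst G)"

type_synonym 'a rgraph = "'a graph \<times> 'a"

definition rooted_graph :: "'a rgraph \<Rightarrow> bool" where
  "rooted_graph Gu \<longleftrightarrow> simple_graph (fst Gu) \<and> snd Gu \<in> fst (fst Gu)"

text \<open>Symmetric functions (formal power series in x_1, x_2, ...) represented by their
coefficient function on monomials; a monomial is an exponent vector nat => nat
(colour c corresponds to variable x_c).\<close>
type_synonym sfun = "(nat \<Rightarrow> nat) \<Rightarrow> int"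

definition sf_mult :: "sfun \<Rightarrow> sfun \<Rightarrow> sfun" where
  "sf_mult f g = (\<lambda>\<alpha>. \<Sum>\<beta>\<in>{\<beta>. \<forall>c. \<beta> c \<le> \<alpha> c}. f \<beta> * g (\<lambda>c. \<alpha> c - \<beta> c))"

definition proper_colorings :: "'a graph \<Rightarrow> ('a \<Rightarrow> nat) set" where
  "proper_colorings G = {\<kappa>. (\<forall>v\<in>fst G. 1 \<le> \<kappa> v) \<and> (\<forall>v. v \<notin> fst G \<longrightarrow> \<kappa> v = 0) \<and>
      (\<forall>x y. {x, y} \<in> snd G \<longrightarrow> x \<noteq> y \<longrightarrow> \<kappa> x \<noteq> \<kappa> y)}"

definition chrom_sym :: "'a graph \<Rightarrow> sfun" where
  "chrom_sym G = (\<lambda>\<alpha>. int (card {\<kappa> \<in> proper_colorings G.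
        \<forall>c. \<alpha> c = card {v \<in> fst G. \<kappa> v = c}}))"

text \<open>Cycle C_m (m >= 3), with C_2 = K_2, rooted at vertex 0; and K_1.\<close>
definition cycle_graph :: "nat \<Rightarrow> nat rgraph" where
  "cycle_graph m = (({0..<m}, {{i, Suc i mod m} | i. i < m}), 0)"

definition K1 :: "unit rgraph" where
  "K1 = (({()}, {}), ())"

text \<open>Vertices of the spider: the centre, leg vertices Leg i j (leg i, distance j >= 1 from
the centre, 1 <= j <= tau_i), and the vertices of the three attached graphs.
The root u_i of G_i is identified with the far end of leg i (the centre if tau_i = 0).\<close>
datatype ('a, 'b, 'c) spv = Ctr | Leg nat nat | In1 'a | In2 'b | In3 'c

definition legpos :: "nat \<Rightarrow> nat \<Rightarrow> ('a, 'b, 'c) spv" where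
  "legpos i j = (if j = 0 then Ctr else Leg i j)"

definition sp_emb :: "('d \<Rightarrow> ('a, 'b, 'c) spv) \<Rightarrow> nat \<Rightarrow> nat \<Rightarrow> 'd \<Rightarrow> 'd \<Rightarrow> ('a, 'b, 'c) spv" where
  "sp_emb f i t u v = (if v = u then legpos i t else f v)"

definition leg_verts :: "nat \<Rightarrow> nat \<Rightarrow> ('a, 'b, 'c) spv set" where
  "leg_verts i t = {Leg i j | j. 1 \<le> j \<and> j \<le> t}"

definition leg_edges :: "nat \<Rightarrow> nat \<Rightarrow> ('a, 'b, 'c) spv set set" where
  "leg_edges i t = {{legpos i j, legpos i (Suc j)} | j. j < t}"

definition spider :: "nat \<Rightarrow> nat \<Rightarrow> nat \<Rightarrow> 'a rgraph \<Rightarrow> 'b rgraph \<Rightarrow> 'c rgraph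
    \<Rightarrow> ('a, 'b, 'c) spv graph" where
  "spider t1 t2 t3 G1 G2 G3 =
    (let e1 = sp_emb In1 1 t1 (snd G1); e2 = sp_emb In2 2 t2 (snd G2); e3 = sp_emb In3 3 t3 (snd G3)
     in ({Ctr} \<union> leg_verts 1 t1 \<union> leg_verts 2 t2 \<union> leg_verts 3 t3
           \<union> e1 ` fst (fst G1) \<union> e2 ` fst (fst G2) \<union> e3 ` fst (fst G3),
         leg_edges 1 t1 \<union> leg_edges 2 t2 \<union> leg_edges 3 t3
           \<union> (\<lambda>e. e1 ` e) ` snd (fst G1) \<union> (\<lambda>e. e2 ` e) ` snd (fst G2)
           \<union> (\<lambda>e. e3 ` e) ` snd (fst G3)))"

definition spider2 :: "nat \<Rightarrow> nat \<Rightarrow> nat \<Rightarrow> 'a rgraph \<Rightarrow> 'b rgraph \<Rightarrow> ('a, 'b, unit) spv graph" where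
  "spider2 g h j G H = spider g h j G H K1"

end

theory Submission
  imports Defs
begin

text \<open>
  Let \<open>A = S\<^sup>g\<^sup>h\<^sub>k(G, H)\<close> and let \<open>v\<close> be the end of its third leg. With \<open>n = m - 1\<close>
  new vertices \<open>1, \<dots>, n\<close> (and \<open>v\<close> as vertex \<open>0\<close>), \<open>S\<^sup>g\<^sup>h\<^sup>k(G, H, C\<^sub>m)\<close> is \<open>A\<close> plus the
  cycle \<open>0, \<dots>, n\<close>, \<open>S\<^sup>g\<^sup>h\<^sub>k\<^sub>+\<^sub>n(G, H)\<close> is \<open>A\<close> plus the path \<open>0, \<dots>, n\<close>, and
  \<open>S\<^sup>g\<^sup>h\<^sub>k\<^sub>+\<^sub>l\<^sub>-\<^sub>1(G, H) \<union> C\<^sub>m\<^sub>-\<^sub>l\<close> is \<open>A\<close> plus the path \<open>0, \<dots>, l - 1\<close> and the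
  cycle \<open>l, \<dots>, n\<close>. Fix the multiset of colors and compare colorings through their color
  sequences \<open>s\<^sub>0, \<dots>, s\<^sub>n\<close> on \<open>0, \<dots>, n\<close>. Let \<open>p\<close> count the colorings proper on the path
  and \<open>e\<^sub>j\<close> those among them with \<open>s\<^sub>n = s\<^sub>j\<close>; the cycle contributes \<open>p - e\<^sub>0\<close>. A coloring
  proper on the path \<open>0, \<dots>, l - 1\<close> and the cycle \<open>l, \<dots>, n\<close> either has \<open>s\<^sub>l\<^sub>-\<^sub>1 \<noteq> s\<^sub>l\<close>,
  and is then a path coloring with \<open>s\<^sub>n \<noteq> s\<^sub>l\<close> (\<open>p - e\<^sub>l\<close> of them), or \<open>s\<^sub>l\<^sub>-\<^sub>1 = s\<^sub>l\<close>,
  and then rotating the colors of \<open>l, \<dots>, n\<close> makes it a path coloring with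
  \<open>s\<^sub>n = s\<^sub>l\<^sub>-\<^sub>1\<close> (\<open>e\<^sub>l\<^sub>-\<^sub>1\<close> of them). Summing over \<open>l\<close> telescopes, and \<open>e\<^sub>n\<^sub>-\<^sub>1 = 0\<close>.
  Since the count of colorings of a disjoint union is the product of the counts, the
  symmetric functions satisfy the same identity.
\<close>

section \<open>Color counts and proper colorings\<close>

definition color_count :: "'v set \<Rightarrow> ('v \<Rightarrow> nat) \<Rightarrow> nat \<Rightarrow> nat" where
  "color_count W \<kappa> = (\<lambda>c. card {v \<in> W. \<kappa> v = c})"

definition proper_colorings_with_count :: "'v graph \<Rightarrow> (nat \<Rightarrow> nat) \<Rightarrow> ('v \<Rightarrow> nat) set" where
  "proper_colorings_with_count G \<alpha> = {\<kappa> \<in> proper_colorings G. color_count (fst G) \<kappa> = \<alpha>}"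

lemma chrom_sym_eq_card: "chrom_sym G \<alpha> = int (card (proper_colorings_with_count G \<alpha>))"
  unfolding chrom_sym_def proper_colorings_with_count_def color_count_def
  by (rule arg_cong[where f="\<lambda>S. int (card S)"]) (auto simp: fun_eq_iff)

lemma color_count_compose_bij:
  assumes "bij_betw \<sigma> W W"
  shows "color_count W (\<kappa> \<circ> \<sigma>) = color_count W \<kappa>"
proof
  fix c
  have "bij_betw \<sigma> {x \<in> W. \<kappa> (\<sigma> x) = c} {y \<in> W. \<kappa> y = c}"
    using assms by (rule bij_betw_Collect) simp
  then show "color_count W (\<kappa> \<circ> \<sigma>) c = color_count W \<kappa> c"
    unfolding color_count_def by (simp add: bij_betw_same_card)
qed

lemma color_count_image:
  assumes "inj_on f V"
  shows "color_count (f ` V) \<kappa> = color_count V (\<kappa> \<circ> f)"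
proof
  fix c
  have "{y \<in> f ` V. \<kappa> y = c} = f ` {x \<in> V. \<kappa> (f x) = c}" by auto
  moreover have "inj_on f {x \<in> V. \<kappa> (f x) = c}" using assms by (rule inj_on_subset) auto
  ultimately show "color_count (f ` V) \<kappa> c = color_count V (\<kappa> \<circ> f) c"
    unfolding color_count_def by (simp add: card_image)
qed

lemma color_count_Inl_Inr:
  assumes "finite V1" "finite V2"
  shows "color_count (Inl ` V1 \<union> Inr ` V2) \<kappa> c =
    color_count V1 (\<kappa> \<circ> Inl) c + color_count V2 (\<kappa> \<circ> Inr) c"
proof -
  have "{x \<in> Inl ` V1 \<union> Inr ` V2. \<kappa> x = c} =
        Inl ` {a \<in> V1. \<kappa> (Inl a) = c} \<union> Inr ` {b \<in> V2. \<kappa> (Inr b) = c}" by auto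
  moreover have "card (Inl ` {a \<in> V1. \<kappa> (Inl a) = c} \<union> Inr ` {b \<in> V2. \<kappa> (Inr b) = c})
      = card {a \<in> V1. \<kappa> (Inl a) = c} + card {b \<in> V2. \<kappa> (Inr b) = c}"
    using assms by (subst card_Un_disjoint) (auto simp: card_image)
  ultimately show ?thesis unfolding color_count_def by simp
qed

lemma color_count_pos_imp_in_image:
  assumes "color_count W \<kappa> c > 0"
  shows "c \<in> \<kappa> ` W"
proof (rule ccontr)
  assume "c \<notin> \<kappa> ` W"
  then have "{v \<in> W. \<kappa> v = c} = {}" by auto
  then have "color_count W \<kappa> c = 0" unfolding color_count_def by (simp only: card.empty)
  with assms show False by simp
qed

lemma finite_colorings_with_count:
  assumes W: "finite W"
  shows "finite {\<kappa>. (\<forall>v. v \<notin> W \<longrightarrow> \<kappa> v = 0) \<and> color_count W \<kappa> = \<alpha>}" (is "finite ?S")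
proof (cases "?S = {}")
  case False
  then obtain \<kappa>0 where \<kappa>0: "\<kappa>0 \<in> ?S" by blast
  have "?S \<subseteq> {f. \<forall>x. (x \<in> W \<longrightarrow> f x \<in> \<kappa>0 ` W) \<and> (x \<notin> W \<longrightarrow> f x = 0)}"
  proof (intro subsetI CollectI allI)
    fix \<kappa> x assume "\<kappa> \<in> ?S"
    then have \<kappa>: "\<forall>v. v \<notin> W \<longrightarrow> \<kappa> v = 0" "color_count W \<kappa> = color_count W \<kappa>0"
      using \<kappa>0 by auto
    have "x \<in> W \<Longrightarrow> color_count W \<kappa> (\<kappa> x) > 0"
      using W unfolding color_count_def by (subst card_gt_0_iff) auto
    then have "x \<in> W \<Longrightarrow> \<kappa> x \<in> \<kappa>0 ` W"
      unfolding \<kappa>(2) by (rule color_count_pos_imp_in_image)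
    then show "(x \<in> W \<longrightarrow> \<kappa> x \<in> \<kappa>0 ` W) \<and> (x \<notin> W \<longrightarrow> \<kappa> x = 0)" using \<kappa>(1) by blast
  qed
  then show ?thesis by (rule finite_subset) (simp add: W finite_set_of_finite_funs)
next
  case True
  then show ?thesis by (metis finite.emptyI)
qed

lemma finite_dominated_by_color_count:
  assumes "finite W"
  shows "finite {\<beta>. \<forall>c. \<beta> c \<le> color_count W \<kappa> c}"
proof (rule finite_subset[OF _ finite_set_of_finite_funs])
  show "{\<beta>. \<forall>c. \<beta> c \<le> color_count W \<kappa> c} \<subseteq>
    {f. \<forall>x. (x \<in> \<kappa> ` W \<longrightarrow> f x \<in> {..card W}) \<and> (x \<notin> \<kappa> ` W \<longrightarrow> f x = 0)}"
  proof clarify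
    fix \<beta> c assume \<beta>: "\<forall>c. \<beta> c \<le> color_count W \<kappa> c"
    have "color_count W \<kappa> c \<le> card W"
      unfolding color_count_def using assms by (intro card_mono) auto
    moreover have "c \<notin> \<kappa> ` W \<Longrightarrow> color_count W \<kappa> c = 0"
      using color_count_pos_imp_in_image by blast
    ultimately show "(c \<in> \<kappa> ` W \<longrightarrow> \<beta> c \<in> {..card W}) \<and> (c \<notin> \<kappa> ` W \<longrightarrow> \<beta> c = 0)"
      using \<beta>[rule_format, of c] by auto
  qed
qed (use assms in simp_all)

definition proper_on_edges :: "'v set set \<Rightarrow> ('v \<Rightarrow> nat) \<Rightarrow> bool" where
  "proper_on_edges E \<kappa> \<longleftrightarrow> (\<forall>x y. {x, y} \<in> E \<longrightarrow> x \<noteq> y \<longrightarrow> \<kappa> x \<noteq> \<kappa> y)"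

definition edges_in :: "'v set \<Rightarrow> 'v set set \<Rightarrow> bool" where
  "edges_in V E \<longleftrightarrow> (\<forall>e\<in>E. \<exists>x y. e = {x, y} \<and> x \<noteq> y \<and> x \<in> V \<and> y \<in> V)"

lemma simple_graph_iff: "simple_graph G \<longleftrightarrow> finite (fst G) \<and> edges_in (fst G) (snd G)"
  unfolding simple_graph_def edges_in_def ..

lemma edges_in_Un [simp]: "edges_in V (E1 \<union> E2) \<longleftrightarrow> edges_in V E1 \<and> edges_in V E2"
  unfolding edges_in_def ball_Un ..

lemma edges_in_empty [simp]: "edges_in V {}"
  unfolding edges_in_def by simp

lemma edges_in_insert:
  "edges_in V (insert {x, y} E) \<longleftrightarrow> x \<noteq> y \<and> x \<in> V \<and> y \<in> V \<and> edges_in V E"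
proof -
  have "(\<exists>a b. {x, y} = {a, b} \<and> a \<noteq> b \<and> a \<in> V \<and> b \<in> V) \<longleftrightarrow> x \<noteq> y \<and> x \<in> V \<and> y \<in> V"
    (is "?L \<longleftrightarrow> ?R")
  proof
    assume ?L
    then obtain a b where "{x, y} = {a, b}" "a \<noteq> b" "a \<in> V" "b \<in> V" by blast
    then show ?R by (auto simp: doubleton_eq_iff)
  next
    assume ?R
    then show ?L by (intro exI[of _ x] exI[of _ y]) simp
  qed
  then show ?thesis unfolding edges_in_def by (simp only: ball_simps conj_assoc)
qed

lemma edges_in_mono:
  assumes "edges_in V E" "V \<subseteq> W"
  shows "edges_in W E"
  unfolding edges_in_def
proof
  fix e assume "e \<in> E"
  then obtain x y where "e = {x, y}" "x \<noteq> y" "x \<in> V" "y \<in> V"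
    using assms(1) unfolding edges_in_def by blast
  with assms(2) show "\<exists>x y. e = {x, y} \<and> x \<noteq> y \<and> x \<in> W \<and> y \<in> W" by blast
qed

lemma edges_in_memD:
  assumes "edges_in V E" "{x, y} \<in> E"
  shows "x \<in> V" "y \<in> V"
proof -
  obtain a b where "{x, y} = {a, b}" "a \<in> V" "b \<in> V"
    using assms unfolding edges_in_def by blast
  then show "x \<in> V" "y \<in> V" by (auto simp: doubleton_eq_iff)
qed

lemma edges_in_image:
  assumes "edges_in V E" "inj_on f V" "f ` V \<subseteq> W"
  shows "edges_in W ((\<lambda>e. f ` e) ` E)"
  unfolding edges_in_def
proof
  fix e assume "e \<in> (\<lambda>e. f ` e) ` E"
  then obtain e0 where e0: "e0 \<in> E" "e = f ` e0" by blast
  then obtain x y where "e0 = {x, y}" "x \<noteq> y" "x \<in> V" "y \<in> V"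
    using assms(1) unfolding edges_in_def by blast
  with e0(2) assms(2,3) have "e = {f x, f y}" "f x \<noteq> f y" "f x \<in> W" "f y \<in> W"
    by (auto simp: inj_on_eq_iff)
  then show "\<exists>x y. e = {x, y} \<and> x \<noteq> y \<and> x \<in> W \<and> y \<in> W" by blast
qed

lemma proper_colorings_iff:
  "\<kappa> \<in> proper_colorings G \<longleftrightarrow>
    (\<forall>v\<in>fst G. 1 \<le> \<kappa> v) \<and> (\<forall>v. v \<notin> fst G \<longrightarrow> \<kappa> v = 0) \<and> proper_on_edges (snd G) \<kappa>"
  unfolding proper_colorings_def proper_on_edges_def by auto

lemma proper_on_edges_Un [simp]:
  "proper_on_edges (A \<union> B) \<kappa> \<longleftrightarrow> proper_on_edges A \<kappa> \<and> proper_on_edges B \<kappa>"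
  unfolding proper_on_edges_def by blast

lemma proper_on_edges_empty [simp]: "proper_on_edges {} \<kappa>"
  unfolding proper_on_edges_def by blast

lemma proper_on_edges_pairs:
  "proper_on_edges ((\<lambda>i. {a i, b i}) ` S) \<kappa> \<longleftrightarrow> (\<forall>i\<in>S. a i \<noteq> b i \<longrightarrow> \<kappa> (a i) \<noteq> \<kappa> (b i))"
  unfolding proper_on_edges_def
proof (intro iffI ballI impI allI)
  fix i assume "\<forall>x y. {x, y} \<in> (\<lambda>i. {a i, b i}) ` S \<longrightarrow> x \<noteq> y \<longrightarrow> \<kappa> x \<noteq> \<kappa> y"
    and "i \<in> S" "a i \<noteq> b i"
  then show "\<kappa> (a i) \<noteq> \<kappa> (b i)" by blast
next
  fix x y assume H: "\<forall>i\<in>S. a i \<noteq> b i \<longrightarrow> \<kappa> (a i) \<noteq> \<kappa> (b i)"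
    and xy: "{x, y} \<in> (\<lambda>i. {a i, b i}) ` S" "x \<noteq> y"
  then obtain i where "i \<in> S" "{x, y} = {a i, b i}" by blast
  then show "\<kappa> x \<noteq> \<kappa> y" using H xy(2) by (auto simp: doubleton_eq_iff)
qed

lemma proper_on_edges_insert:
  "proper_on_edges (insert {a, b} E) \<kappa> \<longleftrightarrow> (a \<noteq> b \<longrightarrow> \<kappa> a \<noteq> \<kappa> b) \<and> proper_on_edges E \<kappa>"
proof -
  have "(\<forall>x y. {x, y} = {a, b} \<longrightarrow> x \<noteq> y \<longrightarrow> \<kappa> x \<noteq> \<kappa> y) \<longleftrightarrow> (a \<noteq> b \<longrightarrow> \<kappa> a \<noteq> \<kappa> b)"
  proof
    assume "a \<noteq> b \<longrightarrow> \<kappa> a \<noteq> \<kappa> b"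
    then show "\<forall>x y. {x, y} = {a, b} \<longrightarrow> x \<noteq> y \<longrightarrow> \<kappa> x \<noteq> \<kappa> y"
      by (auto simp: doubleton_eq_iff)
  qed blast
  then show ?thesis
    unfolding proper_on_edges_def insert_iff imp_disjL all_conj_distrib by (simp only:)
qed

lemma proper_on_edges_image:
  assumes edges: "edges_in V E" and inj: "inj_on f V"
  shows "proper_on_edges ((\<lambda>e. f ` e) ` E) \<kappa> \<longleftrightarrow> proper_on_edges E (\<kappa> \<circ> f)"
  unfolding proper_on_edges_def
proof (intro iffI allI impI)
  fix x y assume H: "\<forall>p q. {p, q} \<in> (\<lambda>e. f ` e) ` E \<longrightarrow> p \<noteq> q \<longrightarrow> \<kappa> p \<noteq> \<kappa> q"
    and xy: "{x, y} \<in> E" "x \<noteq> y"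
  have "{f x, f y} \<in> (\<lambda>e. f ` e) ` E" using imageI[OF xy(1), of "\<lambda>e. f ` e"] by simp
  moreover have "f x \<noteq> f y"
    using xy edges_in_memD[OF edges xy(1)] inj by (auto dest: inj_onD)
  ultimately show "(\<kappa> \<circ> f) x \<noteq> (\<kappa> \<circ> f) y" using H by simp
next
  fix p q assume H: "\<forall>x y. {x, y} \<in> E \<longrightarrow> x \<noteq> y \<longrightarrow> (\<kappa> \<circ> f) x \<noteq> (\<kappa> \<circ> f) y"
    and pq: "{p, q} \<in> (\<lambda>e. f ` e) ` E" "p \<noteq> q"
  then obtain e where e: "e \<in> E" "{p, q} = f ` e" by auto
  then obtain a b where ab: "e = {a, b}" "a \<noteq> b"
    using edges unfolding edges_in_def by blast
  with e have "{p, q} = {f a, f b}" "\<kappa> (f a) \<noteq> \<kappa> (f b)" using H by auto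
  then show "\<kappa> p \<noteq> \<kappa> q" by (auto simp: doubleton_eq_iff)
qed

lemma proper_on_edges_image_inj:
  assumes "inj f"
  shows "proper_on_edges ((\<lambda>e. f ` e) ` E) \<kappa> \<longleftrightarrow> proper_on_edges E (\<kappa> \<circ> f)"
  unfolding proper_on_edges_def
proof (intro iffI allI impI)
  fix x y assume H: "\<forall>p q. {p, q} \<in> (\<lambda>e. f ` e) ` E \<longrightarrow> p \<noteq> q \<longrightarrow> \<kappa> p \<noteq> \<kappa> q"
    and xy: "{x, y} \<in> E" "x \<noteq> y"
  have "{f x, f y} \<in> (\<lambda>e. f ` e) ` E" using imageI[OF xy(1), of "\<lambda>e. f ` e"] by simp
  moreover have "f x \<noteq> f y" using assms xy(2) by (simp add: inj_eq)
  ultimately show "(\<kappa> \<circ> f) x \<noteq> (\<kappa> \<circ> f) y" using H by simp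
next
  fix p q assume H: "\<forall>x y. {x, y} \<in> E \<longrightarrow> x \<noteq> y \<longrightarrow> (\<kappa> \<circ> f) x \<noteq> (\<kappa> \<circ> f) y"
    and pq: "{p, q} \<in> (\<lambda>e. f ` e) ` E" "p \<noteq> q"
  then obtain e where e: "e \<in> E" "{p, q} = f ` e" by auto
  then obtain a b where ab: "a \<in> e" "b \<in> e" "p = f a" "q = f b" by blast
  have "e = {a, b}"
  proof
    show "e \<subseteq> {a, b}"
    proof
      fix c assume "c \<in> e"
      then have "f c \<in> {p, q}" using e(2) by auto
      then show "c \<in> {a, b}" using ab assms by (auto simp: inj_eq)
    qed
  qed (use ab in auto)
  then show "\<kappa> p \<noteq> \<kappa> q" using H e(1) ab pq(2) by auto
qed

lemma proper_on_edges_cong: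
  assumes edges: "edges_in V E" and eq: "\<forall>x\<in>V. \<kappa>1 x = \<kappa>2 x"
  shows "proper_on_edges E \<kappa>1 \<longleftrightarrow> proper_on_edges E \<kappa>2"
proof -
  have "\<kappa>1 x \<noteq> \<kappa>1 y \<longleftrightarrow> \<kappa>2 x \<noteq> \<kappa>2 y" if "{x, y} \<in> E" for x y
    using edges_in_memD[OF edges that] eq by simp
  then show ?thesis unfolding proper_on_edges_def by blast
qed

section \<open>Relabelling and disjoint unions\<close>

definition graph_image :: "('x \<Rightarrow> 'y) \<Rightarrow> 'x graph \<Rightarrow> 'y graph" where
  "graph_image f G = (f ` fst G, (\<lambda>e. f ` e) ` snd G)"

lemma chrom_sym_graph_image:
  assumes G: "simple_graph G" and inj: "inj_on f (fst G)"
  shows "chrom_sym (graph_image f G) = chrom_sym G"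
proof
  fix \<alpha>
  obtain V E where G_eq: "G = (V, E)" by fastforce
  have edges: "edges_in V E" using G by (simp add: G_eq simple_graph_iff)
  have injV: "inj_on f V" using inj by (simp add: G_eq)
  define pull where "pull \<kappa> = (\<lambda>x. if x \<in> V then \<kappa> (f x) else (0::nat))" for \<kappa>
  define push where "push \<kappa> = (\<lambda>y. if y \<in> f ` V then \<kappa> (inv_into V f y) else (0::nat))" for \<kappa>
  let ?A = "proper_colorings_with_count (graph_image f G) \<alpha>"
  let ?B = "proper_colorings_with_count G \<alpha>"
  have pull_iff: "\<kappa> \<in> ?A \<longleftrightarrow> pull \<kappa> \<in> ?B" if zero: "\<forall>y. y \<notin> f ` V \<longrightarrow> \<kappa> y = 0" for \<kappa>
  proof -
    have "color_count V (pull \<kappa>) = color_count V (\<kappa> \<circ> f)"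
      unfolding color_count_def pull_def by (auto intro!: arg_cong[where f=card])
    moreover have "proper_on_edges E (pull \<kappa>) \<longleftrightarrow> proper_on_edges E (\<kappa> \<circ> f)"
      using edges by (rule proper_on_edges_cong) (simp add: pull_def)
    ultimately show ?thesis
      using zero unfolding proper_colorings_with_count_def
      by (simp add: G_eq graph_image_def proper_colorings_iff color_count_image[OF injV]
          proper_on_edges_image[OF edges injV]) (auto simp: pull_def)
  qed
  have "bij_betw pull ?A ?B"
  proof (rule bij_betw_byWitness[where f'=push])
    show "\<forall>\<kappa>\<in>?A. push (pull \<kappa>) = \<kappa>"
      by (auto simp: proper_colorings_with_count_def push_def pull_def G_eq graph_image_def
          proper_colorings_iff fun_eq_iff inv_into_into injV)
    show "\<forall>\<kappa>\<in>?B. pull (push \<kappa>) = \<kappa>"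
      by (auto simp: proper_colorings_with_count_def push_def pull_def G_eq proper_colorings_iff
          fun_eq_iff injV)
    show "pull ` ?A \<subseteq> ?B"
      using pull_iff
      by (auto simp: proper_colorings_with_count_def G_eq graph_image_def proper_colorings_iff)
    show "push ` ?B \<subseteq> ?A"
    proof (rule image_subsetI)
      fix \<kappa> assume "\<kappa> \<in> ?B"
      moreover have "pull (push \<kappa>) = \<kappa>" if "\<forall>v. v \<notin> V \<longrightarrow> \<kappa> v = 0"
        using that by (auto simp: push_def pull_def fun_eq_iff injV)
      ultimately show "push \<kappa> \<in> ?A"
        using pull_iff[of "push \<kappa>"]
        by (simp add: proper_colorings_with_count_def push_def G_eq proper_colorings_iff)
    qed
  qed
  then show "chrom_sym (graph_image f G) \<alpha> = chrom_sym G \<alpha>"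
    by (simp add: chrom_sym_eq_card bij_betw_same_card)
qed

definition disjoint_union :: "'x graph \<Rightarrow> 'y graph \<Rightarrow> ('x + 'y) graph" where
  "disjoint_union G1 G2 =
    (Inl ` fst G1 \<union> Inr ` fst G2, (\<lambda>e. Inl ` e) ` snd G1 \<union> (\<lambda>e. Inr ` e) ` snd G2)"

lemma proper_colorings_disjoint_union:
  "\<kappa> \<in> proper_colorings (disjoint_union G1 G2) \<longleftrightarrow>
    \<kappa> \<circ> Inl \<in> proper_colorings G1 \<and> \<kappa> \<circ> Inr \<in> proper_colorings G2"
proof -
  have "(\<forall>v. v \<notin> Inl ` fst G1 \<union> Inr ` fst G2 \<longrightarrow> \<kappa> v = 0) \<longleftrightarrow>
      (\<forall>a. a \<notin> fst G1 \<longrightarrow> \<kappa> (Inl a) = 0) \<and> (\<forall>b. b \<notin> fst G2 \<longrightarrow> \<kappa> (Inr b) = 0)"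
    by (subst split_sum_all) auto
  then show ?thesis
    unfolding proper_colorings_iff disjoint_union_def fst_conv snd_conv proper_on_edges_Un
      proper_on_edges_image_inj[OF inj_Inl] proper_on_edges_image_inj[OF inj_Inr]
    by auto
qed

lemma color_count_disjoint_union:
  assumes "finite (fst G1)" "finite (fst G2)"
  shows "color_count (fst (disjoint_union G1 G2)) \<kappa> c =
    color_count (fst G1) (\<kappa> \<circ> Inl) c + color_count (fst G2) (\<kappa> \<circ> Inr) c"
  unfolding disjoint_union_def fst_conv using assms by (rule color_count_Inl_Inr)

lemma bij_betw_disjoint_union_colorings:
  assumes fin: "finite (fst G1)" "finite (fst G2)" and \<beta>: "\<forall>c. \<beta> c \<le> \<alpha> c"
  shows "bij_betw (\<lambda>\<kappa>. (\<kappa> \<circ> Inl, \<kappa> \<circ> Inr))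
    {\<kappa> \<in> proper_colorings_with_count (disjoint_union G1 G2) \<alpha>. color_count (fst G1) (\<kappa> \<circ> Inl) = \<beta>}
    (proper_colorings_with_count G1 \<beta> \<times> proper_colorings_with_count G2 (\<lambda>c. \<alpha> c - \<beta> c))"
proof (rule bij_betw_byWitness[where f'="\<lambda>(\<kappa>1, \<kappa>2). case_sum \<kappa>1 \<kappa>2"])
  have case_sum_comp: "case_sum \<kappa>1 \<kappa>2 \<circ> Inl = \<kappa>1" "case_sum \<kappa>1 \<kappa>2 \<circ> Inr = \<kappa>2" for \<kappa>1 \<kappa>2 :: "_ \<Rightarrow> nat"
    by (auto simp: fun_eq_iff)
  note count = color_count_disjoint_union[OF fin]
  show "\<forall>\<kappa>\<in>{\<kappa> \<in> proper_colorings_with_count (disjoint_union G1 G2) \<alpha>.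
      color_count (fst G1) (\<kappa> \<circ> Inl) = \<beta>}.
      (case (\<kappa> \<circ> Inl, \<kappa> \<circ> Inr) of (\<kappa>1, \<kappa>2) \<Rightarrow> case_sum \<kappa>1 \<kappa>2) = \<kappa>"
    by (auto simp: fun_eq_iff split: sum.split)
  show "\<forall>p\<in>proper_colorings_with_count G1 \<beta> \<times> proper_colorings_with_count G2 (\<lambda>c. \<alpha> c - \<beta> c).
      (\<lambda>\<kappa>. (\<kappa> \<circ> Inl, \<kappa> \<circ> Inr)) (case p of (\<kappa>1, \<kappa>2) \<Rightarrow> case_sum \<kappa>1 \<kappa>2) = p"
    by (auto simp: case_sum_comp)
  show "(\<lambda>\<kappa>. (\<kappa> \<circ> Inl, \<kappa> \<circ> Inr)) `
      {\<kappa> \<in> proper_colorings_with_count (disjoint_union G1 G2) \<alpha>. color_count (fst G1) (\<kappa> \<circ> Inl) = \<beta>}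
      \<subseteq> proper_colorings_with_count G1 \<beta> \<times> proper_colorings_with_count G2 (\<lambda>c. \<alpha> c - \<beta> c)"
    by (auto simp: proper_colorings_with_count_def proper_colorings_disjoint_union count)
  show "(\<lambda>(\<kappa>1, \<kappa>2). case_sum \<kappa>1 \<kappa>2) `
      (proper_colorings_with_count G1 \<beta> \<times> proper_colorings_with_count G2 (\<lambda>c. \<alpha> c - \<beta> c))
      \<subseteq> {\<kappa> \<in> proper_colorings_with_count (disjoint_union G1 G2) \<alpha>.
           color_count (fst G1) (\<kappa> \<circ> Inl) = \<beta>}"
    using \<beta> by (auto simp: proper_colorings_with_count_def proper_colorings_disjoint_union
        case_sum_comp count fun_eq_iff)
qed

lemma card_proper_colorings_disjoint_union:
  fixes \<alpha> :: "nat \<Rightarrow> nat"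
  assumes fin: "finite (fst G1)" "finite (fst G2)"
  defines "B \<equiv> {\<beta>. \<forall>c. \<beta> c \<le> \<alpha> c}"
  shows "card (proper_colorings_with_count (disjoint_union G1 G2) \<alpha>) =
    (\<Sum>\<beta>\<in>B. card {\<kappa> \<in> proper_colorings_with_count (disjoint_union G1 G2) \<alpha>.
                   color_count (fst G1) (\<kappa> \<circ> Inl) = \<beta>})"
    (is "card ?Y = (\<Sum>\<beta>\<in>B. card (?fibre \<beta>))")
proof (cases "?Y = {}")
  case True
  then show ?thesis by simp
next
  case False
  then obtain \<kappa>0 where "\<kappa>0 \<in> ?Y" by blast
  then have "B = {\<beta>. \<forall>c. \<beta> c \<le> color_count (fst (disjoint_union G1 G2)) \<kappa>0 c}"
    by (simp add: B_def proper_colorings_with_count_def)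
  then have "finite B"
    using fin by (simp add: finite_dominated_by_color_count disjoint_union_def)
  moreover have "finite ?Y"
    by (rule finite_subset[OF _ finite_colorings_with_count[of "fst (disjoint_union G1 G2)" \<alpha>]])
      (use fin in \<open>auto simp: proper_colorings_with_count_def proper_colorings_iff
          disjoint_union_def\<close>)
  ultimately have "card (\<Union>\<beta>\<in>B. ?fibre \<beta>) = (\<Sum>\<beta>\<in>B. card (?fibre \<beta>))"
    by (intro card_UN_disjoint) auto
  moreover have "?Y = (\<Union>\<beta>\<in>B. ?fibre \<beta>)"
    using fin by (auto simp: B_def proper_colorings_with_count_def color_count_disjoint_union)
  ultimately show ?thesis by simp
qed

lemma chrom_sym_disjoint_union:
  assumes fin: "finite (fst G1)" "finite (fst G2)"
  shows "chrom_sym (disjoint_union G1 G2) = sf_mult (chrom_sym G1) (chrom_sym G2)"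
proof
  fix \<alpha>
  have "chrom_sym (disjoint_union G1 G2) \<alpha> =
      (\<Sum>\<beta>\<in>{\<beta>. \<forall>c. \<beta> c \<le> \<alpha> c}. int (card {\<kappa> \<in> proper_colorings_with_count (disjoint_union G1 G2) \<alpha>.
         color_count (fst G1) (\<kappa> \<circ> Inl) = \<beta>}))"
    unfolding chrom_sym_eq_card card_proper_colorings_disjoint_union[OF fin] by simp
  also have "\<dots> = sf_mult (chrom_sym G1) (chrom_sym G2) \<alpha>"
    unfolding sf_mult_def chrom_sym_eq_card
    by (intro sum.cong refl)
      (simp add: bij_betw_same_card[OF bij_betw_disjoint_union_colorings[OF fin]]
        card_cartesian_product)
  finally show "chrom_sym (disjoint_union G1 G2) \<alpha> = sf_mult (chrom_sym G1) (chrom_sym G2) \<alpha>" .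
qed

section \<open>Proper color sequences along a path\<close>

definition path_proper :: "(nat \<Rightarrow> 'c) \<Rightarrow> nat \<Rightarrow> nat \<Rightarrow> bool" where
  "path_proper s a b \<longleftrightarrow> (\<forall>i\<in>{a..<b}. s i \<noteq> s (Suc i))"

lemma path_proper_append:
  assumes "a \<le> b" "b \<le> c"
  shows "path_proper s a c \<longleftrightarrow> path_proper s a b \<and> path_proper s b c"
  using assms unfolding path_proper_def by (auto dest: leI)

lemma path_proper_single: "path_proper s i (Suc i) \<longleftrightarrow> s i \<noteq> s (Suc i)"
  unfolding path_proper_def by simp

lemma path_proper_Suc_shift: "path_proper (\<lambda>i. s (Suc i)) a b \<longleftrightarrow> path_proper s (Suc a) (Suc b)"
  unfolding path_proper_def by (metis Suc_le_D atLeastLessThan_iff not_less_eq_eq Suc_less_eq)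

lemma path_proper_cong:
  assumes "\<And>i. a \<le> i \<Longrightarrow> i \<le> b \<Longrightarrow> s i = t i"
  shows "path_proper s a b \<longleftrightarrow> path_proper t a b"
  using assms unfolding path_proper_def by auto

definition cycle_shift :: "nat \<Rightarrow> nat \<Rightarrow> nat \<Rightarrow> nat" where
  "cycle_shift l n i = (if l \<le> i \<and> i < n then Suc i else if i = n then l else i)"

definition cycle_unshift :: "nat \<Rightarrow> nat \<Rightarrow> nat \<Rightarrow> nat" where
  "cycle_unshift l n i = (if l < i \<and> i \<le> n then i - 1 else if i = l then n else i)"

lemma cycle_shift_unshift: "l \<le> n \<Longrightarrow> cycle_shift l n (cycle_unshift l n i) = i"
  by (auto simp: cycle_shift_def cycle_unshift_def)

lemma cycle_unshift_shift: "l \<le> n \<Longrightarrow> cycle_unshift l n (cycle_shift l n i) = i"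
  by (auto simp: cycle_shift_def cycle_unshift_def)

lemma path_proper_cycle_shift:
  assumes l: "1 \<le> l" "l < n" and eq: "s (l - 1) = s l"
  shows "path_proper (s \<circ> cycle_shift l n) 0 n \<longleftrightarrow>
    path_proper s 0 (l - 1) \<and> path_proper s l n \<and> s n \<noteq> s l"
proof -
  let ?r = "s \<circ> cycle_shift l n"
  have "path_proper ?r 0 n \<longleftrightarrow>
      path_proper ?r 0 (l - 1) \<and> path_proper ?r (l - 1) (n - 1) \<and> path_proper ?r (n - 1) n"
    using l path_proper_append[of 0 "l - 1" n ?r] path_proper_append[of "l - 1" "n - 1" n ?r]
    by simp
  moreover have "path_proper ?r 0 (l - 1) \<longleftrightarrow> path_proper s 0 (l - 1)"
    using l by (intro path_proper_cong) (auto simp: cycle_shift_def)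
  moreover have "path_proper ?r (l - 1) (n - 1) \<longleftrightarrow> path_proper (\<lambda>i. s (Suc i)) (l - 1) (n - 1)"
  proof (rule path_proper_cong)
    fix i assume "l - 1 \<le> i" "i \<le> n - 1"
    then show "?r i = s (Suc i)"
      using l eq by (cases "i = l - 1") (auto simp: cycle_shift_def)
  qed
  moreover have "path_proper (\<lambda>i. s (Suc i)) (l - 1) (n - 1) \<longleftrightarrow> path_proper s l n"
    using l by (simp add: path_proper_Suc_shift)
  moreover have "path_proper ?r (n - 1) n \<longleftrightarrow> s n \<noteq> s l"
  proof -
    have "cycle_shift l n (n - 1) = n" "cycle_shift l n n = l" "Suc (n - 1) = n"
      using l by (auto simp: cycle_shift_def)
    then show ?thesis using path_proper_single[of ?r "n - 1"] by simp
  qed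
  ultimately show ?thesis by blast
qed

lemma card_Collect_bij_betw:
  assumes "bij_betw \<rho> B B"
  shows "card {x \<in> B. P (\<rho> x)} = card {x \<in> B. P x}"
proof -
  have "bij_betw \<rho> {x \<in> B. P (\<rho> x)} {x \<in> B. P x}"
    by (rule bij_betw_Collect[OF assms]) simp
  then show ?thesis by (rule bij_betw_same_card)
qed

lemma card_Collect_split:
  assumes "finite B"
  shows "card {x \<in> B. P x} = card {x \<in> B. P x \<and> Q x} + card {x \<in> B. P x \<and> \<not> Q x}"
proof -
  have "card ({x \<in> B. P x \<and> Q x} \<union> {x \<in> B. P x \<and> \<not> Q x}) =
      card {x \<in> B. P x \<and> Q x} + card {x \<in> B. P x \<and> \<not> Q x}"
    using assms by (intro card_Un_disjoint) auto
  moreover have "{x \<in> B. P x \<and> Q x} \<union> {x \<in> B. P x \<and> \<not> Q x} = {x \<in> B. P x}" by blast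
  ultimately show ?thesis by simp
qed

text \<open>Split according to whether \<open>s (l - 1) = s l\<close>; in the second case \<open>\<rho>\<close> identifies the
  sequences with the path-proper ones ending in the color \<open>s (l - 1)\<close>.\<close>

lemma card_path_and_cycle_sequences:
  fixes seq :: "'k \<Rightarrow> nat \<Rightarrow> 'c"
  assumes B: "finite B" and l: "1 \<le> l" "l < n"
    and \<rho>: "bij_betw \<rho> B B" "\<And>\<kappa>. \<kappa> \<in> B \<Longrightarrow> seq (\<rho> \<kappa>) = seq \<kappa> \<circ> cycle_shift l n"
  shows "card {\<kappa> \<in> B. path_proper (seq \<kappa>) 0 (l - 1) \<and> path_proper (seq \<kappa>) l n \<and> seq \<kappa> n \<noteq> seq \<kappa> l}
    + card {\<kappa> \<in> B. path_proper (seq \<kappa>) 0 n \<and> seq \<kappa> n = seq \<kappa> l}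
    = card {\<kappa> \<in> B. path_proper (seq \<kappa>) 0 n}
    + card {\<kappa> \<in> B. path_proper (seq \<kappa>) 0 n \<and> seq \<kappa> n = seq \<kappa> (l - 1)}"
proof -
  let ?lollipop = "\<lambda>s. path_proper s 0 (l - 1) \<and> path_proper s l n \<and> s n \<noteq> s l"
  let ?ends = "\<lambda>j s. path_proper s 0 n \<and> s n = s j"
  have split: "path_proper s 0 n \<longleftrightarrow> path_proper s 0 (l - 1) \<and> s (l - 1) \<noteq> s l \<and> path_proper s l n"
    for s :: "nat \<Rightarrow> 'c"
    using l path_proper_append[of 0 "l - 1" n s] path_proper_append[of "l - 1" l n s]
      path_proper_single[of s "l - 1"] by simp
  have rotate: "?ends (l - 1) (seq (\<rho> \<kappa>)) \<longleftrightarrow> ?lollipop (seq \<kappa>) \<and> seq \<kappa> (l - 1) = seq \<kappa> l"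
    if "\<kappa> \<in> B" for \<kappa>
    using \<rho>(2)[OF that] path_proper_cycle_shift[OF l, of "seq \<kappa>"] l
    by (auto simp: cycle_shift_def)
  have "card {\<kappa> \<in> B. ?lollipop (seq \<kappa>)} =
      card {\<kappa> \<in> B. ?lollipop (seq \<kappa>) \<and> seq \<kappa> (l - 1) \<noteq> seq \<kappa> l}
      + card {\<kappa> \<in> B. ?lollipop (seq \<kappa>) \<and> seq \<kappa> (l - 1) = seq \<kappa> l}"
    using card_Collect_split[OF B, of "\<lambda>\<kappa>. ?lollipop (seq \<kappa>)" "\<lambda>\<kappa>. seq \<kappa> (l - 1) \<noteq> seq \<kappa> l"]
    by simp
  also have "{\<kappa> \<in> B. ?lollipop (seq \<kappa>) \<and> seq \<kappa> (l - 1) \<noteq> seq \<kappa> l} =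
      {\<kappa> \<in> B. path_proper (seq \<kappa>) 0 n \<and> seq \<kappa> n \<noteq> seq \<kappa> l}"
    using split by blast
  also have "card {\<kappa> \<in> B. ?lollipop (seq \<kappa>) \<and> seq \<kappa> (l - 1) = seq \<kappa> l} =
      card {\<kappa> \<in> B. ?ends (l - 1) (seq (\<rho> \<kappa>))}"
    using rotate by (metis (no_types, lifting))
  also have "\<dots> = card {\<kappa> \<in> B. ?ends (l - 1) (seq \<kappa>)}"
    by (rule card_Collect_bij_betw[OF \<rho>(1), of "\<lambda>\<kappa>. ?ends (l - 1) (seq \<kappa>)"])
  finally show ?thesis
    using card_Collect_split[OF B, of "\<lambda>\<kappa>. path_proper (seq \<kappa>) 0 n" "\<lambda>\<kappa>. seq \<kappa> n = seq \<kappa> l"]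
    by auto
qed

lemma card_cycle_sequences:
  fixes seq :: "'k \<Rightarrow> nat \<Rightarrow> 'c"
  assumes B: "finite B" and n: "1 \<le> n"
    and rotations: "\<And>l. 1 \<le> l \<Longrightarrow> l < n \<Longrightarrow>
      \<exists>\<rho>. bij_betw \<rho> B B \<and> (\<forall>\<kappa>\<in>B. seq (\<rho> \<kappa>) = seq \<kappa> \<circ> cycle_shift l n)"
  shows "int (card {\<kappa> \<in> B. path_proper (seq \<kappa>) 0 n \<and> seq \<kappa> n \<noteq> seq \<kappa> 0}) =
    int n * int (card {\<kappa> \<in> B. path_proper (seq \<kappa>) 0 n})
    - (\<Sum>l = 1..n - 1. int (card {\<kappa> \<in> B. path_proper (seq \<kappa>) 0 (l - 1) \<and>
                                    path_proper (seq \<kappa>) l n \<and> seq \<kappa> n \<noteq> seq \<kappa> l}))"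
proof -
  define p where "p = int (card {\<kappa> \<in> B. path_proper (seq \<kappa>) 0 n})"
  define e where "e j = int (card {\<kappa> \<in> B. path_proper (seq \<kappa>) 0 n \<and> seq \<kappa> n = seq \<kappa> j})" for j
  have cycle: "int (card {\<kappa> \<in> B. path_proper (seq \<kappa>) 0 n \<and> seq \<kappa> n \<noteq> seq \<kappa> 0}) = p - e 0"
    using card_Collect_split[OF B, of "\<lambda>\<kappa>. path_proper (seq \<kappa>) 0 n" "\<lambda>\<kappa>. seq \<kappa> n = seq \<kappa> 0"]
    by (simp add: p_def e_def)
  have "seq \<kappa> (n - 1) \<noteq> seq \<kappa> n" if "path_proper (seq \<kappa>) 0 n" for \<kappa>
    using bspec[OF that[unfolded path_proper_def], of "n - 1"] n by simp
  then have no_end: "{\<kappa> \<in> B. path_proper (seq \<kappa>) 0 n \<and> seq \<kappa> n = seq \<kappa> (n - 1)} = {}"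
    by fastforce
  have "e (n - 1) = 0" unfolding e_def no_end by simp
  have "int (card {\<kappa> \<in> B. path_proper (seq \<kappa>) 0 (l - 1) \<and> path_proper (seq \<kappa>) l n \<and>
                          seq \<kappa> n \<noteq> seq \<kappa> l})
      = p + (e (l - 1) - e l)" if l: "l \<in> {1..n - 1}" for l
  proof -
    have l': "1 \<le> l" "l < n" using l by auto
    obtain \<rho> where \<rho>: "bij_betw \<rho> B B" "\<forall>\<kappa>\<in>B. seq (\<rho> \<kappa>) = seq \<kappa> \<circ> cycle_shift l n"
      using rotations[OF l'] by blast
    show ?thesis
      using arg_cong[where f=int,
          OF card_path_and_cycle_sequences[where seq=seq, OF B l' \<rho>(1) bspec[OF \<rho>(2)]]]
      unfolding p_def e_def by simp
  qed
  then have "(\<Sum>l = 1..n - 1. int (card {\<kappa> \<in> B. path_proper (seq \<kappa>) 0 (l - 1) \<and>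
                                    path_proper (seq \<kappa>) l n \<and> seq \<kappa> n \<noteq> seq \<kappa> l}))
      = (\<Sum>l = 1..n - 1. p + (e (l - 1) - e l))"
    by (intro sum.cong) auto
  also have "\<dots> = (\<Sum>l = 1..n - 1. p) - (\<Sum>l = Suc 0..n - 1. e l - e (l - 1))"
    by (simp add: sum.distrib sum_subtractf)
  also have "\<dots> = int (n - 1) * p + e 0"
    using \<open>e (n - 1) = 0\<close> sum_telescope''[of 0 "n - 1" e] by simp
  finally show ?thesis
    using cycle n unfolding p_def[symmetric] by (simp add: of_nat_diff algebra_simps)
qed

section \<open>Attaching paths and cycles at a vertex\<close>

text \<open>Extensions of a graph \<open>A\<close> by new vertices \<open>Inr 1, \<dots>, Inr n\<close>; the vertices of \<open>A\<close>
  are tagged \<open>Inl\<close>, and the attachment vertex \<open>v\<close> plays the role of the new vertex \<open>0\<close>.\<close>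

definition path_vertex :: "'v \<Rightarrow> nat \<Rightarrow> 'v + nat" where
  "path_vertex v i = (if i = 0 then Inl v else Inr i)"

definition extend_graph :: "'v graph \<Rightarrow> nat \<Rightarrow> ('v + nat) set set \<Rightarrow> ('v + nat) graph" where
  "extend_graph A n E = (Inl ` fst A \<union> Inr ` {1..n}, (\<lambda>e. Inl ` e) ` snd A \<union> E)"

definition path_edges :: "'v \<Rightarrow> nat \<Rightarrow> nat \<Rightarrow> ('v + nat) set set" where
  "path_edges v a b = (\<lambda>i. {path_vertex v i, path_vertex v (Suc i)}) ` {a..<b}"

definition attach_path :: "'v graph \<Rightarrow> 'v \<Rightarrow> nat \<Rightarrow> ('v + nat) graph" where
  "attach_path A v n = extend_graph A n (path_edges v 0 n)"

definition attach_cycle :: "'v graph \<Rightarrow> 'v \<Rightarrow> nat \<Rightarrow> ('v + nat) graph" where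
  "attach_cycle A v n = extend_graph A n (path_edges v 0 n \<union> {{path_vertex v n, path_vertex v 0}})"

definition attach_path_and_cycle :: "'v graph \<Rightarrow> 'v \<Rightarrow> nat \<Rightarrow> nat \<Rightarrow> ('v + nat) graph" where
  "attach_path_and_cycle A v n l = extend_graph A n
     (path_edges v 0 (l - 1) \<union> path_edges v l n \<union> {{path_vertex v n, path_vertex v l}})"

lemma path_vertex_eq_iff [simp]: "path_vertex v i = path_vertex v j \<longleftrightarrow> i = j"
  by (simp add: path_vertex_def)

lemma proper_on_path_edges:
  "proper_on_edges (path_edges v a b) \<kappa> \<longleftrightarrow> path_proper (\<kappa> \<circ> path_vertex v) a b"
  unfolding path_edges_def proper_on_edges_pairs path_proper_def by simp

lemma proper_colorings_extend_graph:
  "\<kappa> \<in> proper_colorings (extend_graph A n E) \<longleftrightarrow>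
    \<kappa> \<in> proper_colorings (extend_graph A n {}) \<and> proper_on_edges E \<kappa>"
  unfolding proper_colorings_iff extend_graph_def by auto

lemma chrom_sym_extend_graph:
  "chrom_sym (extend_graph A n E) \<alpha> =
    int (card {\<kappa> \<in> proper_colorings_with_count (extend_graph A n {}) \<alpha>. proper_on_edges E \<kappa>})"
proof -
  have "fst (extend_graph A n E) = fst (extend_graph A n {})" by (simp add: extend_graph_def)
  then have "proper_colorings_with_count (extend_graph A n E) \<alpha> =
      {\<kappa> \<in> proper_colorings_with_count (extend_graph A n {}) \<alpha>. proper_on_edges E \<kappa>}"
    unfolding proper_colorings_with_count_def using proper_colorings_extend_graph[of _ A n E]
    by auto
  then show ?thesis by (simp add: chrom_sym_eq_card)
qed

lemma comp_in_proper_colorings_with_count_extend_graph: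
  fixes \<sigma> :: "'v + nat \<Rightarrow> 'v + nat"
  assumes inv: "\<And>x. \<tau> (\<sigma> x) = x" "\<And>x. \<sigma> (\<tau> x) = x"
    and mem: "\<And>x. \<sigma> x \<in> fst (extend_graph A n {}) \<longleftrightarrow> x \<in> fst (extend_graph A n {})"
    and fixed: "\<And>a. \<sigma> (Inl a) = Inl a"
    and \<kappa>: "\<kappa> \<in> proper_colorings_with_count (extend_graph A n {}) \<alpha>"
  shows "\<kappa> \<circ> \<sigma> \<in> proper_colorings_with_count (extend_graph A n {}) \<alpha>"
proof -
  let ?W = "fst (extend_graph A n {})"
  have "bij_betw \<sigma> ?W ?W"
  proof (rule bij_betw_byWitness[where f'=\<tau>])
    show "\<tau> ` ?W \<subseteq> ?W"
    proof (rule image_subsetI)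
      fix y assume "y \<in> ?W"
      then show "\<tau> y \<in> ?W" using mem[of "\<tau> y"] inv(2)[of y] by simp
    qed
  qed (use inv mem in auto)
  then have "color_count ?W (\<kappa> \<circ> \<sigma>) = color_count ?W \<kappa>" by (rule color_count_compose_bij)
  moreover have "\<kappa> \<circ> \<sigma> \<circ> Inl = \<kappa> \<circ> Inl" using fixed by (simp add: fun_eq_iff)
  moreover have "(\<forall>x\<in>?W. 1 \<le> \<kappa> (\<sigma> x)) \<and> (\<forall>x. x \<notin> ?W \<longrightarrow> \<kappa> (\<sigma> x) = 0)"
    using \<kappa> mem unfolding proper_colorings_with_count_def proper_colorings_iff by blast
  ultimately show ?thesis
    using \<kappa> unfolding proper_colorings_with_count_def proper_colorings_iff
    by (simp add: extend_graph_def proper_on_edges_image_inj comp_assoc)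
qed

lemma map_sum_cycle_shift_path_vertex:
  "1 \<le> l \<Longrightarrow> l \<le> n \<Longrightarrow> map_sum id (cycle_shift l n) \<circ> path_vertex v = path_vertex v \<circ> cycle_shift l n"
  by (auto simp: fun_eq_iff path_vertex_def cycle_shift_def)

lemma bij_betw_comp_cycle_shift:
  assumes l: "1 \<le> l" "l \<le> n"
  shows "bij_betw (\<lambda>\<kappa>. \<kappa> \<circ> map_sum id (cycle_shift l n))
    (proper_colorings_with_count (extend_graph A n {}) \<alpha>)
    (proper_colorings_with_count (extend_graph A n {}) \<alpha>)"
proof -
  let ?\<sigma> = "map_sum id (cycle_shift l n)" and ?\<tau> = "map_sum id (cycle_unshift l n)"
  have inv: "?\<tau> (?\<sigma> x) = x" "?\<sigma> (?\<tau> x) = x" for x :: "'a + nat"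
    using l by (cases x; simp add: cycle_shift_unshift cycle_unshift_shift)+
  have mem: "?\<sigma> x \<in> fst (extend_graph A n {}) \<longleftrightarrow> x \<in> fst (extend_graph A n {})" for x
    using l by (cases x) (auto simp: extend_graph_def cycle_shift_def)
  then have mem': "?\<tau> x \<in> fst (extend_graph A n {}) \<longleftrightarrow> x \<in> fst (extend_graph A n {})" for x
    using inv(2)[of x] by metis
  show ?thesis
  proof (rule bij_betw_byWitness[where f'="\<lambda>\<kappa>. \<kappa> \<circ> ?\<tau>"])
    show "\<forall>\<kappa>\<in>proper_colorings_with_count (extend_graph A n {}) \<alpha>. \<kappa> \<circ> ?\<sigma> \<circ> ?\<tau> = \<kappa>"
      "\<forall>\<kappa>\<in>proper_colorings_with_count (extend_graph A n {}) \<alpha>. \<kappa> \<circ> ?\<tau> \<circ> ?\<sigma> = \<kappa>"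
      using inv by (simp_all add: fun_eq_iff)
    show "(\<lambda>\<kappa>. \<kappa> \<circ> ?\<sigma>) ` proper_colorings_with_count (extend_graph A n {}) \<alpha>
        \<subseteq> proper_colorings_with_count (extend_graph A n {}) \<alpha>"
      by (rule image_subsetI, rule comp_in_proper_colorings_with_count_extend_graph[OF inv mem])
        simp_all
    show "(\<lambda>\<kappa>. \<kappa> \<circ> ?\<tau>) ` proper_colorings_with_count (extend_graph A n {}) \<alpha>
        \<subseteq> proper_colorings_with_count (extend_graph A n {}) \<alpha>"
      by (rule image_subsetI, rule comp_in_proper_colorings_with_count_extend_graph[OF inv(2,1) mem'])
        simp_all
  qed
qed

lemma finite_proper_colorings_with_count_extend_graph:
  "finite (fst A) \<Longrightarrow> finite (proper_colorings_with_count (extend_graph A n {}) \<alpha>)"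
  by (rule finite_subset[OF _ finite_colorings_with_count[of "fst (extend_graph A n {})" \<alpha>]])
    (auto simp: proper_colorings_with_count_def proper_colorings_iff extend_graph_def)

lemma chrom_sym_attach_path_eq_card:
  "chrom_sym (attach_path A v n) \<alpha> =
    int (card {\<kappa> \<in> proper_colorings_with_count (extend_graph A n {}) \<alpha>.
                 path_proper (\<kappa> \<circ> path_vertex v) 0 n})"
  unfolding attach_path_def chrom_sym_extend_graph proper_on_path_edges ..

lemma chrom_sym_attach_cycle_eq_card:
  assumes "1 \<le> n"
  shows "chrom_sym (attach_cycle A v n) \<alpha> =
    int (card {\<kappa> \<in> proper_colorings_with_count (extend_graph A n {}) \<alpha>.
                 path_proper (\<kappa> \<circ> path_vertex v) 0 n \<and> \<kappa> (path_vertex v n) \<noteq> \<kappa> (path_vertex v 0)})"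
proof -
  have "proper_on_edges (path_edges v 0 n \<union> {{path_vertex v n, path_vertex v 0}}) \<kappa> \<longleftrightarrow>
      path_proper (\<kappa> \<circ> path_vertex v) 0 n \<and> \<kappa> (path_vertex v n) \<noteq> \<kappa> (path_vertex v 0)" for \<kappa>
    using assms by (auto simp: proper_on_path_edges proper_on_edges_insert)
  then show ?thesis unfolding attach_cycle_def chrom_sym_extend_graph by simp
qed

lemma chrom_sym_attach_path_and_cycle_eq_card:
  assumes "l < n"
  shows "chrom_sym (attach_path_and_cycle A v n l) \<alpha> =
    int (card {\<kappa> \<in> proper_colorings_with_count (extend_graph A n {}) \<alpha>.
                 path_proper (\<kappa> \<circ> path_vertex v) 0 (l - 1) \<and> path_proper (\<kappa> \<circ> path_vertex v) l n
                 \<and> \<kappa> (path_vertex v n) \<noteq> \<kappa> (path_vertex v l)})"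
proof -
  have "proper_on_edges (path_edges v 0 (l - 1) \<union> path_edges v l n
        \<union> {{path_vertex v n, path_vertex v l}}) \<kappa> \<longleftrightarrow>
      path_proper (\<kappa> \<circ> path_vertex v) 0 (l - 1) \<and> path_proper (\<kappa> \<circ> path_vertex v) l n
      \<and> \<kappa> (path_vertex v n) \<noteq> \<kappa> (path_vertex v l)" for \<kappa>
    using assms by (auto simp: proper_on_path_edges proper_on_edges_insert)
  then show ?thesis unfolding attach_path_and_cycle_def chrom_sym_extend_graph by simp
qed

lemma chrom_sym_attach_cycle_via_path_and_cycle:
  assumes fin: "finite (fst A)" and n: "1 \<le> n"
  shows "chrom_sym (attach_cycle A v n) \<alpha> =
    int n * chrom_sym (attach_path A v n) \<alpha>
    - (\<Sum>l = 1..n - 1. chrom_sym (attach_path_and_cycle A v n l) \<alpha>)"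
proof -
  let ?B = "proper_colorings_with_count (extend_graph A n {}) \<alpha>"
  let ?seq = "\<lambda>\<kappa>. \<kappa> \<circ> path_vertex v"
  have rotations: "\<exists>\<rho>. bij_betw \<rho> ?B ?B \<and> (\<forall>\<kappa>\<in>?B. ?seq (\<rho> \<kappa>) = ?seq \<kappa> \<circ> cycle_shift l n)"
    if "1 \<le> l" "l < n" for l
    using that bij_betw_comp_cycle_shift[of l n A \<alpha>] map_sum_cycle_shift_path_vertex[of l n v]
    by (intro exI[of _ "\<lambda>\<kappa>. \<kappa> \<circ> map_sum id (cycle_shift l n)"]) (simp add: comp_assoc)
  have "(\<Sum>l = 1..n - 1. chrom_sym (attach_path_and_cycle A v n l) \<alpha>) =
      (\<Sum>l = 1..n - 1. int (card {\<kappa> \<in> ?B. path_proper (?seq \<kappa>) 0 (l - 1) \<and>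
                                    path_proper (?seq \<kappa>) l n \<and> ?seq \<kappa> n \<noteq> ?seq \<kappa> l}))"
    by (rule sum.cong) (auto simp: chrom_sym_attach_path_and_cycle_eq_card)
  then show ?thesis
    unfolding chrom_sym_attach_cycle_eq_card[OF n] chrom_sym_attach_path_eq_card
    using card_cycle_sequences[where seq = ?seq,
        OF finite_proper_colorings_with_count_extend_graph[OF fin] n rotations]
    by simp
qed

lemma edges_in_path_edges: "b \<le> n \<Longrightarrow> edges_in (path_vertex v ` {0..n}) (path_edges v a b)"
  unfolding edges_in_def path_edges_def by force

lemma simple_graph_extend_graph:
  assumes A: "simple_graph A" and v: "v \<in> fst A" and E: "edges_in (path_vertex v ` {0..n}) E"
  shows "simple_graph (extend_graph A n E)"
proof -
  have "path_vertex v ` {0..n} \<subseteq> fst (extend_graph A n E)"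
    using v by (auto simp: path_vertex_def extend_graph_def)
  moreover have "edges_in (fst (extend_graph A n E)) ((\<lambda>e. Inl ` e) ` snd A)"
    using A by (intro edges_in_image) (auto simp: simple_graph_iff extend_graph_def)
  ultimately show ?thesis
    using A E edges_in_mono by (auto simp: simple_graph_iff extend_graph_def)
qed

lemma simple_graph_attach_path:
  "simple_graph A \<Longrightarrow> v \<in> fst A \<Longrightarrow> simple_graph (attach_path A v n)"
  unfolding attach_path_def by (rule simple_graph_extend_graph) (auto intro: edges_in_path_edges)

lemma simple_graph_attach_cycle:
  "simple_graph A \<Longrightarrow> v \<in> fst A \<Longrightarrow> 1 \<le> n \<Longrightarrow> simple_graph (attach_cycle A v n)"
  unfolding attach_cycle_def
  by (intro simple_graph_extend_graph) (auto simp: edges_in_insert edges_in_path_edges)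

lemma simple_graph_attach_path_and_cycle:
  "simple_graph A \<Longrightarrow> v \<in> fst A \<Longrightarrow> 1 \<le> l \<Longrightarrow> l < n \<Longrightarrow>
    simple_graph (attach_path_and_cycle A v n l)"
  unfolding attach_path_and_cycle_def
  by (intro simple_graph_extend_graph) (auto simp: edges_in_insert edges_in_path_edges)

text \<open>Vertex \<open>l + j\<close> of the cycle in \<open>attach_path_and_cycle A v n l\<close> becomes vertex \<open>j\<close>
  of \<open>C\<^sub>n\<^sub>-\<^sub>l\<^sub>+\<^sub>1\<close>.\<close>

definition split_path_and_cycle :: "nat \<Rightarrow> 'v + nat \<Rightarrow> ('v + nat) + nat" where
  "split_path_and_cycle l x =
    (case x of Inl a \<Rightarrow> Inl (Inl a) | Inr i \<Rightarrow> if i < l then Inl (Inr i) else Inr (i - l))"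

lemma split_path_and_cycle_path_vertex:
  "1 \<le> l \<Longrightarrow> split_path_and_cycle l (path_vertex v i) =
    (if i < l then Inl (path_vertex v i) else Inr (i - l))"
  by (auto simp: split_path_and_cycle_def path_vertex_def)

lemma inj_split_path_and_cycle: "inj (split_path_and_cycle l)"
proof (rule injI)
  fix x y assume "split_path_and_cycle l x = split_path_and_cycle l y"
  then show "x = y" by (cases x; cases y) (auto simp: split_path_and_cycle_def split: if_splits)
qed

lemma cycle_graph_edges: "snd (fst (cycle_graph N)) = (\<lambda>i. {i, Suc i mod N}) ` {..<N}"
  unfolding cycle_graph_def by auto

lemma image_lessThan_Suc_mod:
  assumes "1 \<le> N"
  shows "(\<lambda>i. F i (Suc i mod N)) ` {..<N} = (\<lambda>i. F i (Suc i)) ` {..<N - 1} \<union> {F (N - 1) 0}"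
proof -
  have "{..<N} = {..<N - 1} \<union> {N - 1}" using assms by auto
  moreover have "(\<lambda>i. F i (Suc i mod N)) ` {..<N - 1} = (\<lambda>i. F i (Suc i)) ` {..<N - 1}"
    by (rule image_cong) auto
  ultimately show ?thesis using assms by simp
qed

lemma image_atLeastLessThan_diff:
  "(\<lambda>i. F (i - l) (Suc i - l)) ` {l..<n} = (\<lambda>j. F j (Suc j)) ` {..<n - l}"
proof -
  have "{l..<n} = (\<lambda>j. j + l) ` {..<n - l}"
  proof
    show "{l..<n} \<subseteq> (\<lambda>j. j + l) ` {..<n - l}"
    proof
      fix i assume "i \<in> {l..<n}"
      then have "i = (i - l) + l" "i - l \<in> {..<n - l}" by auto
      then show "i \<in> (\<lambda>j. j + l) ` {..<n - l}" by (rule image_eqI)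
    qed
  qed auto
  then show ?thesis by (simp add: image_image Suc_diff_le)
qed

lemma split_path_and_cycle_vertices:
  assumes l: "1 \<le> l" "l < n"
  shows "split_path_and_cycle l ` fst (attach_path_and_cycle A v n l) =
    fst (disjoint_union (attach_path A v (l - 1)) (fst (cycle_graph (n - l + 1))))"
proof -
  have "{1..n} = {1..l - 1} \<union> {l..n}" using l by auto
  moreover have
    "(\<lambda>i. split_path_and_cycle l (Inr i :: 'a + nat)) ` {1..l - 1} = Inl ` Inr ` {1..l - 1}"
    by (auto simp: split_path_and_cycle_def image_image)
  moreover have "(\<lambda>i. split_path_and_cycle l (Inr i :: 'a + nat)) ` {l..n} = Inr ` {0..<n - l + 1}"
    using l by (auto simp: split_path_and_cycle_def image_iff intro!: bexI[of _ "_ + l"])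
  ultimately show ?thesis
    by (simp add: attach_path_and_cycle_def attach_path_def extend_graph_def disjoint_union_def
        cycle_graph_def image_Un image_image split_path_and_cycle_def Un_assoc)
qed

lemma split_path_and_cycle_edges:
  assumes l: "1 \<le> l" "l < n"
  shows "(\<lambda>e. split_path_and_cycle l ` e) ` snd (attach_path_and_cycle A v n l) =
    snd (disjoint_union (attach_path A v (l - 1)) (fst (cycle_graph (n - l + 1))))"
proof -
  let ?\<psi> = "split_path_and_cycle l"
  have graph: "(\<lambda>e. ?\<psi> ` e) ` (\<lambda>e. Inl ` e) ` snd A = (\<lambda>e. Inl ` e) ` (\<lambda>e. Inl ` e) ` snd A"
    by (simp add: image_image split_path_and_cycle_def)
  have path: "(\<lambda>e. ?\<psi> ` e) ` path_edges v 0 (l - 1) = (\<lambda>e. Inl ` e) ` path_edges v 0 (l - 1)"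
    unfolding path_edges_def image_image
    by (rule image_cong) (use l in \<open>auto simp: split_path_and_cycle_path_vertex\<close>)
  have cycle_path: "(\<lambda>e. ?\<psi> ` e) ` path_edges v l n = (\<lambda>j. {Inr j, Inr (Suc j)}) ` {..<n - l}"
  proof -
    have "(\<lambda>e. ?\<psi> ` e) ` path_edges v l n = (\<lambda>i. {Inr (i - l), Inr (Suc i - l)}) ` {l..<n}"
      unfolding path_edges_def image_image
      by (rule image_cong) (use l in \<open>auto simp: split_path_and_cycle_path_vertex\<close>)
    then show ?thesis by (simp add: image_atLeastLessThan_diff[where F="\<lambda>a b. {Inr a, Inr b}"])
  qed
  have closing_edge: "(\<lambda>e. ?\<psi> ` e) ` {{path_vertex v n, path_vertex v l}} = {{Inr (n - l), Inr 0}}"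
    using l by (simp add: split_path_and_cycle_path_vertex)
  have cycle: "(\<lambda>e. Inr ` e) ` snd (fst (cycle_graph (n - l + 1))) =
      (\<lambda>j. {Inr j, Inr (Suc j)}) ` {..<n - l} \<union> {{Inr (n - l), Inr 0}}"
    unfolding cycle_graph_edges image_image
    using image_lessThan_Suc_mod[of "n - l + 1" "\<lambda>a b. {Inr a, Inr b}"] by simp
  show ?thesis
    unfolding attach_path_and_cycle_def attach_path_def extend_graph_def disjoint_union_def
      fst_conv snd_conv image_Un graph path cycle_path closing_edge cycle
    by (simp only: Un_assoc)
qed

lemma chrom_sym_attach_path_and_cycle:
  assumes A: "simple_graph A" and v: "v \<in> fst A" and l: "1 \<le> l" "l < n"
  shows "chrom_sym (attach_path_and_cycle A v n l) =
    sf_mult (chrom_sym (attach_path A v (l - 1))) (chrom_sym (fst (cycle_graph (n - l + 1))))"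
proof -
  have "chrom_sym (attach_path_and_cycle A v n l) =
      chrom_sym (graph_image (split_path_and_cycle l) (attach_path_and_cycle A v n l))"
    using simple_graph_attach_path_and_cycle[OF A v l] inj_split_path_and_cycle
    by (intro chrom_sym_graph_image[symmetric]) (auto intro: inj_on_subset)
  also have "graph_image (split_path_and_cycle l) (attach_path_and_cycle A v n l) =
      disjoint_union (attach_path A v (l - 1)) (fst (cycle_graph (n - l + 1)))"
    unfolding graph_image_def split_path_and_cycle_vertices[OF l] split_path_and_cycle_edges[OF l]
    by simp
  also have "chrom_sym \<dots> =
      sf_mult (chrom_sym (attach_path A v (l - 1))) (chrom_sym (fst (cycle_graph (n - l + 1))))"
    using A by (intro chrom_sym_disjoint_union)
      (simp_all add: simple_graph_iff attach_path_def extend_graph_def cycle_graph_def)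
  finally show ?thesis .
qed

theorem chrom_sym_attach_cycle:
  assumes A: "simple_graph A" and v: "v \<in> fst A" and m: "2 \<le> m"
  shows "chrom_sym (attach_cycle A v (m - 1)) =
    (\<lambda>\<alpha>. int (m - 1) * chrom_sym (attach_path A v (m - 1)) \<alpha>
      - (\<Sum>l = 1..m - 2. sf_mult (chrom_sym (attach_path A v (l - 1)))
                                 (chrom_sym (fst (cycle_graph (m - l)))) \<alpha>))"
proof
  fix \<alpha>
  have "finite (fst A)" "1 \<le> m - 1" using A m by (simp_all add: simple_graph_iff)
  note cycle = chrom_sym_attach_cycle_via_path_and_cycle[OF this, of v \<alpha>]
  have "chrom_sym (attach_path_and_cycle A v (m - 1) l) \<alpha> =
      sf_mult (chrom_sym (attach_path A v (l - 1))) (chrom_sym (fst (cycle_graph (m - l)))) \<alpha>"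
    if "l \<in> {1..m - 2}" for l
  proof -
    have "1 \<le> l" "l < m - 1" "m - 1 - l + 1 = m - l" using that by auto
    then show ?thesis using chrom_sym_attach_path_and_cycle[OF A v, of l "m - 1"] by simp
  qed
  then have "(\<Sum>l = 1..m - 2. chrom_sym (attach_path_and_cycle A v (m - 1) l) \<alpha>) =
      (\<Sum>l = 1..m - 2. sf_mult (chrom_sym (attach_path A v (l - 1)))
                                 (chrom_sym (fst (cycle_graph (m - l)))) \<alpha>)"
    by (rule sum.cong[OF refl])
  moreover have "m - 1 - 1 = m - 2" by simp
  ultimately show "chrom_sym (attach_cycle A v (m - 1)) \<alpha> =
      int (m - 1) * chrom_sym (attach_path A v (m - 1)) \<alpha>
      - (\<Sum>l = 1..m - 2. sf_mult (chrom_sym (attach_path A v (l - 1)))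
                                 (chrom_sym (fst (cycle_graph (m - l)))) \<alpha>)"
    using cycle by (simp only:)
qed

section \<open>Spiders\<close>

lemma leg_verts_eq: "leg_verts i t = Leg i ` {1..t}"
  unfolding leg_verts_def by auto

lemma leg_edges_eq: "leg_edges i t = (\<lambda>j. {legpos i j, legpos i (Suc j)}) ` {..<t}"
  unfolding leg_edges_def by auto

lemma legpos_in_leg_verts: "j \<le> t \<Longrightarrow> legpos i j \<in> insert Ctr (leg_verts i t)"
  by (auto simp: legpos_def leg_verts_def)

lemma legpos_neq_In [simp]:
  "legpos i t \<noteq> In1 x" "legpos i t \<noteq> In2 y" "legpos i t \<noteq> In3 z"
  "In1 x \<noteq> legpos i t" "In2 y \<noteq> legpos i t" "In3 z \<noteq> legpos i t"
  by (simp_all add: legpos_def)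

lemma inj_sp_emb_In1: "inj (sp_emb In1 i t r)"
  by (rule injI) (auto simp: sp_emb_def split: if_splits)

lemma inj_sp_emb_In2: "inj (sp_emb In2 i t r)"
  by (rule injI) (auto simp: sp_emb_def split: if_splits)

lemma leg_verts_add: "leg_verts i (k + j) = leg_verts i k \<union> (\<lambda>s. Leg i (k + s)) ` {1..j}"
proof -
  have "{1..k + j} = {1..k} \<union> (\<lambda>s. k + s) ` {1..j}"
  proof
    show "{1..k + j} \<subseteq> {1..k} \<union> (\<lambda>s. k + s) ` {1..j}"
    proof
      fix x assume x: "x \<in> {1..k + j}"
      show "x \<in> {1..k} \<union> (\<lambda>s. k + s) ` {1..j}"
      proof (cases "x \<le> k")
        case False
        then have "x = k + (x - k)" "x - k \<in> {1..j}" using x by auto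
        then show ?thesis by blast
      qed (use x in auto)
    qed
  qed auto
  then have "Leg i ` {1..k + j} = Leg i ` ({1..k} \<union> (\<lambda>s. k + s) ` {1..j})" by (simp only:)
  then show ?thesis unfolding leg_verts_eq by (simp only: image_Un image_image)
qed

lemma leg_edges_add:
  "leg_edges i (k + j) = leg_edges i k \<union> (\<lambda>s. {legpos i (k + s), legpos i (k + Suc s)}) ` {..<j}"
proof -
  have "{..<k + j} = {..<k} \<union> (\<lambda>s. k + s) ` {..<j}"
  proof
    show "{..<k + j} \<subseteq> {..<k} \<union> (\<lambda>s. k + s) ` {..<j}"
    proof
      fix x assume x: "x \<in> {..<k + j}"
      show "x \<in> {..<k} \<union> (\<lambda>s. k + s) ` {..<j}"
      proof (cases "x < k")
        case False
        then have "x = k + (x - k)" "x - k \<in> {..<j}" using x by auto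
        then show ?thesis by blast
      qed simp
    qed
  qed auto
  then show ?thesis unfolding leg_edges_eq by (simp add: image_Un image_image)
qed

definition spider_base_verts :: "nat \<Rightarrow> nat \<Rightarrow> 'a rgraph \<Rightarrow> 'b rgraph \<Rightarrow> ('a, 'b, 'c) spv set" where
  "spider_base_verts g h G H = {Ctr} \<union> leg_verts 1 g \<union> leg_verts 2 h
     \<union> sp_emb In1 1 g (snd G) ` fst (fst G) \<union> sp_emb In2 2 h (snd H) ` fst (fst H)"

definition spider_base_edges :: "nat \<Rightarrow> nat \<Rightarrow> 'a rgraph \<Rightarrow> 'b rgraph \<Rightarrow> ('a, 'b, 'c) spv set set" where
  "spider_base_edges g h G H = leg_edges 1 g \<union> leg_edges 2 h
     \<union> (\<lambda>e. sp_emb In1 1 g (snd G) ` e) ` snd (fst G)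
     \<union> (\<lambda>e. sp_emb In2 2 h (snd H) ` e) ` snd (fst H)"

lemma Ctr_in_spider_base_verts: "Ctr \<in> spider_base_verts g h G H"
  by (simp add: spider_base_verts_def)

lemma Leg3_notin_spider_base_verts: "Leg 3 j \<notin> spider_base_verts g h G H"
  by (auto simp: spider_base_verts_def leg_verts_def sp_emb_def legpos_def)

lemma spider2_eq_base:
  "spider2 g h t G H =
    (spider_base_verts g h G H \<union> leg_verts 3 t, spider_base_edges g h G H \<union> leg_edges 3 t)"
proof -
  have "legpos 3 t \<in> insert Ctr (leg_verts 3 t)" by (rule legpos_in_leg_verts) simp
  then have "sp_emb In3 3 t () ` {()} \<subseteq> insert Ctr (leg_verts 3 t)" by (simp add: sp_emb_def)
  then show ?thesis
    unfolding spider2_def spider_def K1_def Let_def spider_base_verts_def spider_base_edges_def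
    by auto
qed

lemma legpos_in_spider2: "legpos 3 k \<in> fst (spider2 g h k G H)"
  using legpos_in_leg_verts[of k k 3] Ctr_in_spider_base_verts[of g h G H]
  by (auto simp: spider2_eq_base)

lemma edges_in_leg_edges:
  fixes V :: "('a, 'b, 'c) spv set"
  assumes "insert Ctr (leg_verts i t) \<subseteq> V"
  shows "edges_in V (leg_edges i t)"
  unfolding edges_in_def
proof
  fix e :: "('a, 'b, 'c) spv set" assume "e \<in> leg_edges i t"
  then obtain j where j: "j < t" "e = {legpos i j, legpos i (Suc j)}" by (auto simp: leg_edges_eq)
  then have "legpos i j \<in> V" "legpos i (Suc j) \<in> V"
    using legpos_in_leg_verts[of j t i] legpos_in_leg_verts[of "Suc j" t i] assms by auto
  with j show "\<exists>x y. e = {x, y} \<and> x \<noteq> y \<and> x \<in> V \<and> y \<in> V"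
    by (intro exI[of _ "legpos i j"] exI[of _ "legpos i (Suc j)"]) (simp add: legpos_def)
qed

lemma simple_graph_spider2:
  assumes G: "rooted_graph G" and H: "rooted_graph H"
  shows "simple_graph (spider2 g h t G H)"
proof -
  let ?V = "fst (spider2 g h t G H)"
  have G': "simple_graph (fst G)" and H': "simple_graph (fst H)"
    using G H by (simp_all add: rooted_graph_def)
  have "insert Ctr (leg_verts 1 g) \<subseteq> ?V" "insert Ctr (leg_verts 2 h) \<subseteq> ?V"
    "insert Ctr (leg_verts 3 t) \<subseteq> ?V"
    by (auto simp: spider2_eq_base spider_base_verts_def)
  then have legs: "edges_in ?V (leg_edges 1 g)" "edges_in ?V (leg_edges 2 h)"
    "edges_in ?V (leg_edges 3 t)"
    by (simp_all add: edges_in_leg_edges)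
  have "edges_in ?V ((\<lambda>e. sp_emb In1 1 g (snd G) ` e) ` snd (fst G))"
    using G' inj_on_subset[OF inj_sp_emb_In1 subset_UNIV]
    by (intro edges_in_image) (auto simp: simple_graph_iff spider2_eq_base spider_base_verts_def)
  moreover have "edges_in ?V ((\<lambda>e. sp_emb In2 2 h (snd H) ` e) ` snd (fst H))"
    using H' inj_on_subset[OF inj_sp_emb_In2 subset_UNIV]
    by (intro edges_in_image) (auto simp: simple_graph_iff spider2_eq_base spider_base_verts_def)
  moreover have "finite ?V"
    using G' H' by (simp add: spider2_eq_base spider_base_verts_def leg_verts_eq simple_graph_iff)
  ultimately show ?thesis
    using legs unfolding simple_graph_iff by (simp add: spider2_eq_base spider_base_edges_def)
qed

definition extend_leg3 :: "nat \<Rightarrow> ('a, 'b, 'c) spv + nat \<Rightarrow> ('a, 'b, 'c) spv" where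
  "extend_leg3 k x = (case x of Inl a \<Rightarrow> a | Inr i \<Rightarrow> Leg 3 (k + i))"

lemma extend_leg3_path_vertex: "extend_leg3 k (path_vertex (legpos 3 k) i) = legpos 3 (k + i)"
  by (auto simp: extend_leg3_def path_vertex_def legpos_def)

lemma spider2_add_eq_graph_image:
  "spider2 g h (k + j) G H =
    graph_image (extend_leg3 k) (attach_path (spider2 g h k G H) (legpos 3 k) j)"
proof -
  let ?f = "extend_leg3 k :: ('a, 'b, unit) spv + nat \<Rightarrow> ('a, 'b, unit) spv"
  have "?f ` Inr ` {1..j} = (\<lambda>s. Leg 3 (k + s)) ` {1..j}"
    by (simp add: image_image extend_leg3_def)
  moreover have "(\<lambda>e. ?f ` e) ` path_edges (legpos 3 k) 0 j =
      (\<lambda>s. {legpos 3 (k + s), legpos 3 (k + Suc s)}) ` {..<j}"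
    unfolding path_edges_def image_image by (simp add: extend_leg3_path_vertex atLeast0LessThan)
  moreover have "?f ` Inl ` X = X" "(\<lambda>e. ?f ` e) ` (\<lambda>e. Inl ` e) ` Y = Y" for X Y
    by (simp_all add: image_image extend_leg3_def)
  ultimately show ?thesis
    unfolding graph_image_def attach_path_def extend_graph_def spider2_eq_base fst_conv snd_conv
      leg_verts_add leg_edges_add image_Un
    by (simp add: Un_assoc)
qed

lemma inj_on_extend_leg3:
  "inj_on (extend_leg3 k) (fst (attach_path (spider2 g h k G H) (legpos 3 k) j))"
proof -
  have "Leg 3 (k + i) \<notin> fst (spider2 g h k G H)" if "1 \<le> i" for i
    using that Leg3_notin_spider_base_verts[of _ g h G H]
    by (auto simp: spider2_eq_base leg_verts_def)
  then show ?thesis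
    by (auto simp: inj_on_def attach_path_def extend_graph_def extend_leg3_def)
qed

lemma chrom_sym_spider2_add:
  assumes "rooted_graph G" "rooted_graph H"
  shows "chrom_sym (attach_path (spider2 g h k G H) (legpos 3 k) j) =
    chrom_sym (spider2 g h (k + j) G H)"
  unfolding spider2_add_eq_graph_image
  using simple_graph_attach_path[OF simple_graph_spider2[OF assms] legpos_in_spider2]
  by (rule chrom_sym_graph_image[OF _ inj_on_extend_leg3, symmetric])

text \<open>The vertices of \<open>S\<^sup>g\<^sup>h\<^sub>k(G, H)\<close> carry the unit type in their third component;
  \<open>relabel_K1\<close> moves them to the vertex type of \<open>S\<^sup>g\<^sup>h\<^sup>k(G, H, C\<^sub>m)\<close>.\<close>

definition relabel_K1 :: "('a, 'b, unit) spv \<Rightarrow> ('a, 'b, nat) spv" where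
  "relabel_K1 x =
    (case x of Ctr \<Rightarrow> Ctr | Leg i j \<Rightarrow> Leg i j | In1 a \<Rightarrow> In1 a | In2 b \<Rightarrow> In2 b | In3 c \<Rightarrow> In3 0)"

lemma relabel_K1_simps [simp]:
  "relabel_K1 Ctr = Ctr" "relabel_K1 (Leg i j) = Leg i j" "relabel_K1 (In1 a) = In1 a"
  "relabel_K1 (In2 b) = In2 b" "relabel_K1 (In3 c) = In3 0"
  "relabel_K1 (legpos i j) = legpos i j"
  "relabel_K1 (sp_emb In1 i t r x) = sp_emb In1 i t r x"
  "relabel_K1 (sp_emb In2 i t r y) = sp_emb In2 i t r y"
  by (simp_all add: relabel_K1_def legpos_def sp_emb_def)

lemma inj_relabel_K1: "inj relabel_K1"
proof (rule injI)
  fix x y :: "('a, 'b, unit) spv" assume "relabel_K1 x = relabel_K1 y"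
  then show "x = y" by (cases x; cases y) auto
qed

lemma relabel_K1_spider_base:
  "relabel_K1 ` spider_base_verts g h G H = spider_base_verts g h G H"
  "(\<lambda>e. relabel_K1 ` e) ` spider_base_edges g h G H = spider_base_edges g h G H"
  "relabel_K1 ` leg_verts i t = leg_verts i t"
  "(\<lambda>e. relabel_K1 ` e) ` leg_edges i t = leg_edges i t"
  unfolding spider_base_verts_def spider_base_edges_def leg_verts_eq leg_edges_eq
  by (simp_all add: image_Un image_image)

definition cycle_leg_embedding :: "('a, 'b, unit) spv + nat \<Rightarrow> ('a, 'b, nat) spv" where
  "cycle_leg_embedding x = (case x of Inl a \<Rightarrow> relabel_K1 a | Inr i \<Rightarrow> In3 i)"

lemma cycle_leg_embedding_path_vertex:
  "cycle_leg_embedding (path_vertex (legpos 3 k) i) = sp_emb In3 3 k 0 i"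
  by (auto simp: cycle_leg_embedding_def path_vertex_def sp_emb_def)

lemma spider_cycle_graph_eq_base:
  assumes "m \<ge> 2"
  shows "spider g h k G H (cycle_graph m) =
    (spider_base_verts g h G H \<union> leg_verts 3 k \<union> In3 ` {1..<m},
     spider_base_edges g h G H \<union> leg_edges 3 k
       \<union> (\<lambda>i. {sp_emb In3 3 k 0 i, sp_emb In3 3 k 0 (Suc i mod m)}) ` {..<m})"
proof -
  have root: "legpos 3 k \<in> insert Ctr (leg_verts 3 k)" by (rule legpos_in_leg_verts) simp
  have cycle_verts: "sp_emb In3 3 k 0 ` {0..<m} = insert (legpos 3 k) (In3 ` {1..<m})"
  proof -
    have split: "{0..<m} = insert 0 {1..<m}" using assms by auto
    have new: "sp_emb In3 3 k 0 ` {1..<m} = In3 ` {1..<m}"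
      by (rule image_cong) (auto simp: sp_emb_def)
    have root: "sp_emb In3 3 k 0 0 = legpos 3 k" by (simp add: sp_emb_def)
    show ?thesis unfolding split image_insert new root ..
  qed
  have verts: "fst (spider g h k G H (cycle_graph m)) =
      spider_base_verts g h G H \<union> leg_verts 3 k \<union> In3 ` {1..<m}"
    unfolding spider_def cycle_graph_def Let_def fst_conv snd_conv spider_base_verts_def cycle_verts
    using root by blast
  have root_index: "snd (cycle_graph m) = 0" by (simp add: cycle_graph_def)
  have cycle_edges: "(\<lambda>e. sp_emb In3 3 k 0 ` e) ` snd (fst (cycle_graph m))
      = (\<lambda>i. {sp_emb In3 3 k 0 i, sp_emb In3 3 k 0 (Suc i mod m)}) ` {..<m}"
    unfolding cycle_graph_edges image_image by simp
  have "snd (spider g h k G H (cycle_graph m)) =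
      spider_base_edges g h G H \<union> leg_edges 3 k
      \<union> (\<lambda>i. {sp_emb In3 3 k 0 i, sp_emb In3 3 k 0 (Suc i mod m)}) ` {..<m}"
    unfolding spider_def Let_def snd_conv spider_base_edges_def root_index cycle_edges by auto
  with verts show ?thesis by (metis prod.collapse)
qed

lemma spider_cycle_graph_eq_graph_image:
  assumes m: "m \<ge> 2"
  shows "spider g h k G H (cycle_graph m) =
    graph_image cycle_leg_embedding (attach_cycle (spider2 g h k G H) (legpos 3 k) (m - 1))"
proof -
  let ?e = "cycle_leg_embedding :: ('a, 'b, unit) spv + nat \<Rightarrow> ('a, 'b, nat) spv"
  have old: "?e ` Inl ` X = relabel_K1 ` X"
    "(\<lambda>e. ?e ` e) ` (\<lambda>e. Inl ` e) ` Y = (\<lambda>e. relabel_K1 ` e) ` Y" for X Y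
    by (simp_all add: image_image cycle_leg_embedding_def)
  have new: "?e ` Inr ` {1..m - 1} = In3 ` {1..<m}"
    using m by (auto simp: image_image cycle_leg_embedding_def)
  have path: "(\<lambda>e. ?e ` e) ` path_edges (legpos 3 k) 0 (m - 1) =
      (\<lambda>i. {sp_emb In3 3 k 0 i, sp_emb In3 3 k 0 (Suc i)}) ` {..<m - 1}"
    unfolding path_edges_def image_image
    by (simp add: cycle_leg_embedding_path_vertex atLeast0LessThan)
  have closing: "(\<lambda>e. ?e ` e) ` {{path_vertex (legpos 3 k) (m - 1), path_vertex (legpos 3 k) 0}} =
      {{sp_emb In3 3 k 0 (m - 1), sp_emb In3 3 k 0 0}}"
    by (simp add: cycle_leg_embedding_path_vertex)
  have cycle: "(\<lambda>i. {sp_emb In3 3 k 0 i, sp_emb In3 3 k 0 (Suc i mod m)}) ` {..<m} =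
      (\<lambda>i. {sp_emb In3 3 k 0 i, sp_emb In3 3 k 0 (Suc i)}) ` {..<m - 1}
      \<union> {{sp_emb In3 3 k 0 (m - 1), sp_emb In3 3 k 0 0}}"
    using m image_lessThan_Suc_mod[of m "\<lambda>a b. {sp_emb In3 3 k 0 a, sp_emb In3 3 k 0 b}"] by simp
  show ?thesis
    unfolding spider_cycle_graph_eq_base[OF m] graph_image_def attach_cycle_def extend_graph_def
      spider2_eq_base fst_conv snd_conv image_Un old new path closing cycle relabel_K1_spider_base
    by (simp only: Un_assoc)
qed

lemma inj_on_cycle_leg_embedding:
  "inj_on cycle_leg_embedding (fst (attach_cycle (spider2 g h k G H) (legpos 3 k) n))"
proof -
  have "relabel_K1 a \<noteq> In3 i" "In3 i \<noteq> relabel_K1 a" if "1 \<le> i" for a :: "('a, 'b, unit) spv" and i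
    using that by (cases a; simp)+
  then show ?thesis
    by (auto simp: inj_on_def attach_cycle_def extend_graph_def cycle_leg_embedding_def
        inj_eq[OF inj_relabel_K1])
qed

lemma chrom_sym_spider_cycle_graph:
  assumes "rooted_graph G" "rooted_graph H" "m \<ge> 2"
  shows "chrom_sym (spider g h k G H (cycle_graph m)) =
    chrom_sym (attach_cycle (spider2 g h k G H) (legpos 3 k) (m - 1))"
  unfolding spider_cycle_graph_eq_graph_image[OF assms(3)]
  using simple_graph_attach_cycle[OF simple_graph_spider2[OF assms(1,2)] legpos_in_spider2]
    assms(3)
  by (intro chrom_sym_graph_image inj_on_cycle_leg_embedding) simp

theorem theorem4p8:
  fixes G :: "'a rgraph" and H :: "'b rgraph" and g h k m :: nat
  assumes "rooted_graph G" and "rooted_graph H" and "m \<ge> 2"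
  shows "chrom_sym (spider g h k G H (cycle_graph m)) =
    (\<lambda>\<alpha>. int (m - 1) * chrom_sym (spider2 g h (k + m - 1) G H) \<alpha>
       - (\<Sum>l = 1..m - 2. sf_mult (chrom_sym (spider2 g h (k + l - 1) G H))
                                  (chrom_sym (fst (cycle_graph (m - l)))) \<alpha>))"
proof -
  let ?A = "spider2 g h k G H" and ?v = "legpos 3 k :: ('a, 'b, unit) spv"
  have "chrom_sym (spider g h k G H (cycle_graph m)) = chrom_sym (attach_cycle ?A ?v (m - 1))"
    using assms by (rule chrom_sym_spider_cycle_graph)
  also have "\<dots> = (\<lambda>\<alpha>. int (m - 1) * chrom_sym (attach_path ?A ?v (m - 1)) \<alpha>
      - (\<Sum>l = 1..m - 2. sf_mult (chrom_sym (attach_path ?A ?v (l - 1)))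
                                 (chrom_sym (fst (cycle_graph (m - l)))) \<alpha>))"
    using simple_graph_spider2[OF assms(1,2)] legpos_in_spider2 assms(3)
    by (rule chrom_sym_attach_cycle)
  also have "\<dots> = (\<lambda>\<alpha>. int (m - 1) * chrom_sym (spider2 g h (k + m - 1) G H) \<alpha>
       - (\<Sum>l = 1..m - 2. sf_mult (chrom_sym (spider2 g h (k + l - 1) G H))
                                  (chrom_sym (fst (cycle_graph (m - l)))) \<alpha>))"
  proof -
    note path = chrom_sym_spider2_add[OF assms(1,2)]
    have "(\<Sum>l = 1..m - 2. sf_mult (chrom_sym (attach_path ?A ?v (l - 1)))
                                 (chrom_sym (fst (cycle_graph (m - l)))) \<alpha>) =
        (\<Sum>l = 1..m - 2. sf_mult (chrom_sym (spider2 g h (k + l - 1) G H))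
                                 (chrom_sym (fst (cycle_graph (m - l)))) \<alpha>)" for \<alpha>
      by (rule sum.cong) (simp_all add: path)
    then show ?thesis using assms(3) by (simp add: path)
  qed
  finally show ?thesis .
qed

end
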